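(* Let $f(x,y)=\sqrt{\frac{x+y-2}{xy}}$ for real $x,y\geq 1$, and for real numbers $a>b\geq 2$ let $G(a,b)=f(a,b-1)-f(a-1,b)$. Then $G(a,b)>0$.
   Context: $f$ is only defined (in the paper) for arguments $x,y\geq 1$. *)

theory Defs
  imports Complex_Main
begin

definition f :: "real \<Rightarrow> real \<Rightarrow> real" where
  "f x y = sqrt ((x + y - 2) / (x * y))"

definition G :: "real \<Rightarrow> real \<Rightarrow> real" where
  "G a b = f a (b - 1) - f (a - 1) b"

end

theory Submission
  imports Defs
begin

text \<open>Both radicands of \<open>G a b\<close> share the numerator \<open>a + b - 3 > 0\<close>, while the
denominators satisfy \<open>(a - 1) b - a (b - 1) = a - b > 0\<close>; so the first radicand is
strictly larger, and \<open>sqrt\<close> is strictly monotone.\<close>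

theorem lemma1p5:
  fixes a b :: real
  assumes "a > b" and "b \<ge> 2"
  shows "G a b > 0"
proof -
  have numerator_pos: "a + b - 3 > 0" using assms by linarith
  have denominator_pos: "a * (b - 1) > 0" using assms by simp
  have denominator_less: "a * (b - 1) < (a - 1) * b" using assms by (simp add: algebra_simps)
  have "(a + b - 3) / ((a - 1) * b) < (a + b - 3) / (a * (b - 1))"
    using numerator_pos denominator_pos denominator_less by (intro divide_strict_left_mono) auto
  then have "sqrt ((a - 1 + b - 2) / ((a - 1) * b)) < sqrt ((a + (b - 1) - 2) / (a * (b - 1)))"
    by (simp add: algebra_simps)
  then show ?thesis unfolding G_def f_def by simp
qed

end
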